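(* Let $m:\mathbb{R}^3\to\mathbb{R}$ be given by $$m(\xi_1,\xi_2,\xi_3):=\frac{\xi_3}{(\xi_1^2\xi_2^2+\xi_3^2)^{1/2}}.$$ Then for all multi-indices $\alpha=(\alpha_1,\alpha_2,\alpha_3)$, $$|\partial^\alpha m(\xi)|\lesssim|\xi_1|^{-\alpha_1+\alpha_2}\,|(|\xi_1|\xi_2,\xi_3)|^{-\alpha_2-\alpha_3}$$ (so $m$ is a Fefferman–Pipher multiplier). Moreover, $\partial_{\xi_i}m\notin L^\infty$ for each $i=1,2,3$.
   Context: Here $|(|\xi_1|\xi_2,\xi_3)|=(\xi_1^2\xi_2^2+\xi_3^2)^{1/2}$ denotes the Euclidean norm of the vector $(|\xi_1|\xi_2,\xi_3)\in\mathbb{R}^2$, and the estimate is required at all points where $m$ is smooth (i.e. $(\xi_1\xi_2,\xi_3)\neq0$, $\xi_1\ne0$), with implicit constant depending on $\alpha$. A function satisfying these derivative estimates for all multi-indices is called a Fefferman–Pipher (Zygmund) multiplier. *)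

theory Defs
  imports "HOL-Analysis.Analysis"
begin

definition fp_m :: "real \<times> real \<times> real \<Rightarrow> real" where
  "fp_m \<xi> = (case \<xi> of (x1, x2, x3) \<Rightarrow> x3 / sqrt (x1\<^sup>2 * x2\<^sup>2 + x3\<^sup>2))"

definition pd :: "nat \<Rightarrow> (real \<times> real \<times> real \<Rightarrow> real) \<Rightarrow> real \<times> real \<times> real \<Rightarrow> real" where
  "pd i f = (\<lambda>(x1, x2, x3).
     if i = 1 then deriv (\<lambda>t. f (t, x2, x3)) x1
     else if i = 2 then deriv (\<lambda>t. f (x1, t, x3)) x2
     else deriv (\<lambda>t. f (x1, x2, t)) x3)"

definition dalpha :: "nat \<Rightarrow> nat \<Rightarrow> nat \<Rightarrow> (real \<times> real \<times> real \<Rightarrow> real) \<Rightarrow> real \<times> real \<times> real \<Rightarrow> real" where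
  "dalpha a1 a2 a3 f = (pd 1 ^^ a1) ((pd 2 ^^ a2) ((pd 3 ^^ a3) f))"

end

theory Submission
  imports Defs
begin

(* Write s = (x1^2 x2^2 + x3^2)^(1/2). On the domain x1 \<noteq> 0, (x1 x2, x3) \<noteq> 0 every derivative of m
   is a finite sum of terms c x1^i x2^j x3^k / s^p. Differentiating such a term in x1, x2 or x3
   (using ds/dx1 = x1 x2^2 / s, ds/dx2 = x1^2 x2 / s, ds/dx3 = x3 / s) produces at most two terms of
   the same shape, and shifts the bidegree (i - j, j + k - p) by (-1, 0), (1, -1) or (0, -1); m itself
   has bidegree (0, 0). Since |x1 x2| \<le> s and |x3| \<le> s, a term of bidegree (d1, d2) is at most
   |c| |x1|^d1 s^d2, which is the claimed estimate.

   The first derivatives are continuous on the open domain and blow up like 1/t along suitable rays.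
   A continuous function bounded almost everywhere is bounded on every open set, because nonempty
   open sets are not null, so none of the first derivatives is in L^\<infinity>. *)

lemma DERIV_power_mult_inverse_sqrt_power:
  fixes q :: "real \<Rightarrow> real"
  assumes "q t > 0" "(q has_real_derivative q') (at t)"
  shows "((\<lambda>t. t^n * inverse (sqrt (q t))^p) has_real_derivative
     (real n * t^(n-1) * inverse (sqrt (q t))^p - real p / 2 * q' * t^n * inverse (sqrt (q t))^(p+2))) (at t)"
  using assms
  by (intro derivative_eq_intros) ((rule refl | assumption | simp)+, cases p, simp_all)

definition fp_domain :: "(real \<times> real \<times> real) set" where
  "fp_domain = {x. fst x \<noteq> 0 \<and> (fst x * fst (snd x) \<noteq> 0 \<or> snd (snd x) \<noteq> 0)}"

lemma mem_fp_domain [simp]: "(x1, x2, x3) \<in> fp_domain \<longleftrightarrow> x1 \<noteq> 0 \<and> (x1 * x2, x3) \<noteq> (0, 0)"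
  by (simp add: fp_domain_def)

lemma open_fp_domain: "open fp_domain"
  unfolding fp_domain_def
  by (intro open_Collect_conj open_Collect_disj open_Collect_neq continuous_intros)

lemma fp_domain_radicand_pos: "(x1, x2, x3) \<in> fp_domain \<Longrightarrow> 0 < x1\<^sup>2 * x2\<^sup>2 + x3\<^sup>2"
  by (auto simp: power_mult_distrib[symmetric] add_pos_nonneg add_nonneg_pos)

type_synonym fp_term_data = "real \<times> nat \<times> nat \<times> nat \<times> nat"

fun fp_term :: "fp_term_data \<Rightarrow> real \<times> real \<times> real \<Rightarrow> real" where
  "fp_term (c, i, j, k, p) (x1, x2, x3) =
     c * x1^i * x2^j * x3^k * inverse (sqrt (x1\<^sup>2 * x2\<^sup>2 + x3\<^sup>2))^p"

definition fp_sum :: "fp_term_data list \<Rightarrow> real \<times> real \<times> real \<Rightarrow> real" where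
  "fp_sum L x = (\<Sum>\<tau>\<leftarrow>L. fp_term \<tau> x)"

lemma fp_sum_Nil [simp]: "fp_sum [] x = 0"
  and fp_sum_Cons [simp]: "fp_sum (\<tau> # L) x = fp_term \<tau> x + fp_sum L x"
  and fp_sum_append [simp]: "fp_sum (L @ M) x = fp_sum L x + fp_sum M x"
  by (simp_all add: fp_sum_def)

fun pd1_term :: "fp_term_data \<Rightarrow> fp_term_data list" where
  "pd1_term (c, i, j, k, p) =
     (if i = 0 then [] else [(c * real i, i - 1, j, k, p)]) @ [(- c * real p, i + 1, j + 2, k, p + 2)]"

fun pd2_term :: "fp_term_data \<Rightarrow> fp_term_data list" where
  "pd2_term (c, i, j, k, p) =
     (if j = 0 then [] else [(c * real j, i, j - 1, k, p)]) @ [(- c * real p, i + 2, j + 1, k, p + 2)]"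

fun pd3_term :: "fp_term_data \<Rightarrow> fp_term_data list" where
  "pd3_term (c, i, j, k, p) =
     (if k = 0 then [] else [(c * real k, i, j, k - 1, p)]) @ [(- c * real p, i, j, k + 1, p + 2)]"

lemma DERIV_fp_term:
  assumes pos: "0 < x1\<^sup>2 * x2\<^sup>2 + x3\<^sup>2"
  shows "((\<lambda>t. fp_term \<tau> (t, x2, x3)) has_real_derivative fp_sum (pd1_term \<tau>) (x1, x2, x3)) (at x1)"
    and "((\<lambda>t. fp_term \<tau> (x1, t, x3)) has_real_derivative fp_sum (pd2_term \<tau>) (x1, x2, x3)) (at x2)"
    and "((\<lambda>t. fp_term \<tau> (x1, x2, t)) has_real_derivative fp_sum (pd3_term \<tau>) (x1, x2, x3)) (at x3)"
proof -
  obtain c i j k p where \<tau>: "\<tau> = (c, i, j, k, p)"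
    by (cases \<tau>) auto
  let ?r = "\<lambda>x1 x2 x3. inverse (sqrt (x1\<^sup>2 * x2\<^sup>2 + x3\<^sup>2))"
  have "((\<lambda>t. (c * x2^j * x3^k) * (t^i * ?r t x2 x3 ^ p)) has_real_derivative
      (c * x2^j * x3^k) * (real i * x1^(i-1) * ?r x1 x2 x3 ^ p
        - real p / 2 * (2 * x1 * x2\<^sup>2) * x1^i * ?r x1 x2 x3 ^ (p+2))) (at x1)"
    using pos by (intro DERIV_cmult DERIV_power_mult_inverse_sqrt_power) (auto intro!: derivative_eq_intros)
  then show "((\<lambda>t. fp_term \<tau> (t, x2, x3)) has_real_derivative fp_sum (pd1_term \<tau>) (x1, x2, x3)) (at x1)"
    by (cases i) (auto simp: \<tau> algebra_simps power2_eq_square)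
  have "((\<lambda>t. (c * x1^i * x3^k) * (t^j * ?r x1 t x3 ^ p)) has_real_derivative
      (c * x1^i * x3^k) * (real j * x2^(j-1) * ?r x1 x2 x3 ^ p
        - real p / 2 * (2 * x2 * x1\<^sup>2) * x2^j * ?r x1 x2 x3 ^ (p+2))) (at x2)"
    using pos by (intro DERIV_cmult DERIV_power_mult_inverse_sqrt_power) (auto intro!: derivative_eq_intros)
  then show "((\<lambda>t. fp_term \<tau> (x1, t, x3)) has_real_derivative fp_sum (pd2_term \<tau>) (x1, x2, x3)) (at x2)"
    by (cases j) (auto simp: \<tau> algebra_simps power2_eq_square)
  have "((\<lambda>t. (c * x1^i * x2^j) * (t^k * ?r x1 x2 t ^ p)) has_real_derivative
      (c * x1^i * x2^j) * (real k * x3^(k-1) * ?r x1 x2 x3 ^ p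
        - real p / 2 * (2 * x3) * x3^k * ?r x1 x2 x3 ^ (p+2))) (at x3)"
    using pos by (intro DERIV_cmult DERIV_power_mult_inverse_sqrt_power) (auto intro!: derivative_eq_intros)
  then show "((\<lambda>t. fp_term \<tau> (x1, x2, t)) has_real_derivative fp_sum (pd3_term \<tau>) (x1, x2, x3)) (at x3)"
    by (cases k) (auto simp: \<tau> algebra_simps power2_eq_square)
qed

lemma DERIV_fp_sum:
  assumes pos: "0 < x1\<^sup>2 * x2\<^sup>2 + x3\<^sup>2"
  shows "((\<lambda>t. fp_sum L (t, x2, x3)) has_real_derivative fp_sum (concat (map pd1_term L)) (x1, x2, x3)) (at x1)"
    and "((\<lambda>t. fp_sum L (x1, t, x3)) has_real_derivative fp_sum (concat (map pd2_term L)) (x1, x2, x3)) (at x2)"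
    and "((\<lambda>t. fp_sum L (x1, x2, t)) has_real_derivative fp_sum (concat (map pd3_term L)) (x1, x2, x3)) (at x3)"
  by (induction L) (auto intro!: derivative_eq_intros DERIV_fp_term[OF pos])

lemma deriv_eq_if_eq_on_open:
  assumes "open S" "t \<in> S" "\<And>s. s \<in> S \<Longrightarrow> f s = g s" "(g has_real_derivative D) (at t)"
  shows "deriv f t = D"
  using assms by (metis DERIV_imp_deriv has_field_derivative_transform_within_open)

lemma pd_fp_sum:
  assumes g: "\<forall>x\<in>fp_domain. g x = fp_sum L x" and x: "x \<in> fp_domain"
  shows "pd 1 g x = fp_sum (concat (map pd1_term L)) x"
    and "pd 2 g x = fp_sum (concat (map pd2_term L)) x"
    and "pd 3 g x = fp_sum (concat (map pd3_term L)) x"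
proof -
  obtain x1 x2 x3 where x_eq: "x = (x1, x2, x3)"
    by (cases x) auto
  note pos = fp_domain_radicand_pos[OF x[unfolded x_eq]]
  have slices: "open ((\<lambda>t. (t, x2, x3)) -` fp_domain)" "open ((\<lambda>t. (x1, t, x3)) -` fp_domain)"
    "open ((\<lambda>t. (x1, x2, t)) -` fp_domain)"
    by (intro continuous_open_vimage open_fp_domain continuous_intros)+
  show "pd 1 g x = fp_sum (concat (map pd1_term L)) x"
    unfolding x_eq pd_def using x g
    by (auto intro!: deriv_eq_if_eq_on_open[OF slices(1) _ _ DERIV_fp_sum(1)[OF pos]] simp: x_eq)
  show "pd 2 g x = fp_sum (concat (map pd2_term L)) x"
    unfolding x_eq pd_def using x g
    by (auto intro!: deriv_eq_if_eq_on_open[OF slices(2) _ _ DERIV_fp_sum(2)[OF pos]] simp: x_eq)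
  show "pd 3 g x = fp_sum (concat (map pd3_term L)) x"
    unfolding x_eq pd_def using x g
    by (auto intro!: deriv_eq_if_eq_on_open[OF slices(3) _ _ DERIV_fp_sum(3)[OF pos]] simp: x_eq)
qed

definition has_bidegree :: "int \<Rightarrow> int \<Rightarrow> fp_term_data \<Rightarrow> bool" where
  "has_bidegree d1 d2 \<tau> = (case \<tau> of (c, i, j, k, p) \<Rightarrow> int i - int j = d1 \<and> int j + int k - int p = d2)"

lemma has_bidegree_pd_term:
  assumes "has_bidegree d1 d2 \<tau>"
  shows "list_all (has_bidegree (d1 - 1) d2) (pd1_term \<tau>)"
    and "list_all (has_bidegree (d1 + 1) (d2 - 1)) (pd2_term \<tau>)"
    and "list_all (has_bidegree d1 (d2 - 1)) (pd3_term \<tau>)"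
  using assms by (cases \<tau>; simp add: has_bidegree_def)+

lemma has_bidegree_pd_terms:
  assumes "list_all (has_bidegree d1 d2) L"
  shows "list_all (has_bidegree (d1 - 1) d2) (concat (map pd1_term L))"
    and "list_all (has_bidegree (d1 + 1) (d2 - 1)) (concat (map pd2_term L))"
    and "list_all (has_bidegree d1 (d2 - 1)) (concat (map pd3_term L))"
  using assms by (induction L) (simp_all add: has_bidegree_pd_term)

definition has_fp_expansion :: "int \<Rightarrow> int \<Rightarrow> (real \<times> real \<times> real \<Rightarrow> real) \<Rightarrow> bool" where
  "has_fp_expansion d1 d2 g \<longleftrightarrow>
     (\<exists>L. list_all (has_bidegree d1 d2) L \<and> (\<forall>x\<in>fp_domain. g x = fp_sum L x))"

lemma has_fp_expansion_pd:
  assumes "has_fp_expansion d1 d2 g"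
  shows "has_fp_expansion (d1 - 1) d2 (pd 1 g)"
    and "has_fp_expansion (d1 + 1) (d2 - 1) (pd 2 g)"
    and "has_fp_expansion d1 (d2 - 1) (pd 3 g)"
proof -
  obtain L where L: "list_all (has_bidegree d1 d2) L" "\<forall>x\<in>fp_domain. g x = fp_sum L x"
    using assms unfolding has_fp_expansion_def by blast
  show "has_fp_expansion (d1 - 1) d2 (pd 1 g)"
    unfolding has_fp_expansion_def using has_bidegree_pd_terms(1)[OF L(1)] pd_fp_sum(1)[OF L(2)] by blast
  show "has_fp_expansion (d1 + 1) (d2 - 1) (pd 2 g)"
    unfolding has_fp_expansion_def using has_bidegree_pd_terms(2)[OF L(1)] pd_fp_sum(2)[OF L(2)] by blast
  show "has_fp_expansion d1 (d2 - 1) (pd 3 g)"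
    unfolding has_fp_expansion_def using has_bidegree_pd_terms(3)[OF L(1)] pd_fp_sum(3)[OF L(2)] by blast
qed

lemma has_fp_expansion_pd_iterate:
  assumes "has_fp_expansion d1 d2 g"
  shows "has_fp_expansion (d1 - int n) d2 ((pd 1 ^^ n) g)"
    and "has_fp_expansion (d1 + int n) (d2 - int n) ((pd 2 ^^ n) g)"
    and "has_fp_expansion d1 (d2 - int n) ((pd 3 ^^ n) g)"
proof (induction n)
  case (Suc n)
  show "has_fp_expansion (d1 - int (Suc n)) d2 ((pd 1 ^^ Suc n) g)"
    using has_fp_expansion_pd(1)[OF Suc.IH(1)] by (simp add: algebra_simps)
  show "has_fp_expansion (d1 + int (Suc n)) (d2 - int (Suc n)) ((pd 2 ^^ Suc n) g)"
    using has_fp_expansion_pd(2)[OF Suc.IH(2)] by (simp add: algebra_simps)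
  show "has_fp_expansion d1 (d2 - int (Suc n)) ((pd 3 ^^ Suc n) g)"
    using has_fp_expansion_pd(3)[OF Suc.IH(3)] by (simp add: algebra_simps)
qed (use assms in simp_all)

lemma fp_m_eq_fp_term: "fp_m x = fp_term (1, 0, 0, 1, 1) x"
  by (cases x) (simp add: fp_m_def divide_inverse)

lemma has_fp_expansion_dalpha:
  "has_fp_expansion (int a2 - int a1) (- int a3 - int a2) (dalpha a1 a2 a3 fp_m)"
proof -
  have fp_m: "has_fp_expansion 0 0 fp_m"
    unfolding has_fp_expansion_def has_bidegree_def
    by (intro exI[of _ "[(1, 0, 0, 1, 1)]"]) (simp add: fp_m_eq_fp_term)
  show ?thesis
    unfolding dalpha_def
    using has_fp_expansion_pd_iterate(1)[OF has_fp_expansion_pd_iterate(2)[OF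
        has_fp_expansion_pd_iterate(3)[OF fp_m, of a3], of a2], of a1]
    by (simp add: algebra_simps)
qed

lemma abs_fp_term_le:
  assumes x: "(x1, x2, x3) \<in> fp_domain" and \<tau>: "has_bidegree d1 d2 \<tau>"
  shows "\<bar>fp_term \<tau> (x1, x2, x3)\<bar> \<le> \<bar>fst \<tau>\<bar> * \<bar>x1\<bar> powr d1 * sqrt ((\<bar>x1\<bar> * x2)\<^sup>2 + x3\<^sup>2) powr d2"
proof -
  obtain c i j k p where \<tau>_eq: "\<tau> = (c, i, j, k, p)"
    by (cases \<tau>) auto
  define s where "s = sqrt ((\<bar>x1\<bar> * x2)\<^sup>2 + x3\<^sup>2)"
  define a where "a = \<bar>x1\<bar>"
  have sqrt_eq: "sqrt (x1\<^sup>2 * x2\<^sup>2 + x3\<^sup>2) = s"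
    unfolding s_def by (simp add: power_mult_distrib)
  have s: "s > 0"
    using fp_domain_radicand_pos[OF x] sqrt_eq by (metis real_sqrt_gt_0_iff)
  have a: "a > 0"
    using x by (simp add: a_def)
  have d1: "d1 = int i - int j" and d2: "d2 = int j + int k - int p"
    using \<tau> by (auto simp: has_bidegree_def \<tau>_eq)
  have x12_le: "a * \<bar>x2\<bar> \<le> s" and x3_le: "\<bar>x3\<bar> \<le> s"
    using real_sqrt_sum_squares_ge1[of "a * \<bar>x2\<bar>" x3] real_sqrt_sum_squares_ge2[of "\<bar>x3\<bar>" "\<bar>x1 * x2\<bar>"]
    by (simp_all add: s_def a_def power_mult_distrib abs_mult)
  have "\<bar>fp_term \<tau> (x1, x2, x3)\<bar> = \<bar>c\<bar> * (a^i * \<bar>x2\<bar>^j) * \<bar>x3\<bar>^k / s^p"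
    using s by (simp add: \<tau>_eq sqrt_eq a_def abs_mult power_abs divide_inverse power_inverse)
  also have "\<dots> = \<bar>c\<bar> * a powr d1 * ((a * \<bar>x2\<bar>)^j * \<bar>x3\<bar>^k / s^p)"
    using a by (simp add: d1 powr_diff powr_realpow power_mult_distrib)
  also have "\<dots> \<le> \<bar>c\<bar> * a powr d1 * (s^j * s^k / s^p)"
    using s a x12_le x3_le by (intro mult_left_mono divide_right_mono mult_mono power_mono) auto
  also have "s^j * s^k / s^p = s powr d2"
    using s by (simp add: d2 powr_diff powr_add powr_realpow)
  finally show ?thesis
    by (simp add: \<tau>_eq a_def s_def)
qed

lemma abs_fp_sum_le:
  assumes x: "(x1, x2, x3) \<in> fp_domain" and L: "list_all (has_bidegree d1 d2) L"
  shows "\<bar>fp_sum L (x1, x2, x3)\<bar>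
    \<le> (\<Sum>\<tau>\<leftarrow>L. \<bar>fst \<tau>\<bar>) * \<bar>x1\<bar> powr d1 * sqrt ((\<bar>x1\<bar> * x2)\<^sup>2 + x3\<^sup>2) powr d2"
  using L
proof (induction L)
  case (Cons \<tau> L)
  have "\<bar>fp_sum (\<tau> # L) (x1, x2, x3)\<bar> \<le> \<bar>fp_term \<tau> (x1, x2, x3)\<bar> + \<bar>fp_sum L (x1, x2, x3)\<bar>"
    by simp
  also have "\<dots> \<le> \<bar>fst \<tau>\<bar> * \<bar>x1\<bar> powr d1 * sqrt ((\<bar>x1\<bar> * x2)\<^sup>2 + x3\<^sup>2) powr d2
      + (\<Sum>\<tau>\<leftarrow>L. \<bar>fst \<tau>\<bar>) * \<bar>x1\<bar> powr d1 * sqrt ((\<bar>x1\<bar> * x2)\<^sup>2 + x3\<^sup>2) powr d2"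
    using Cons abs_fp_term_le[OF x] by (intro add_mono) auto
  finally show ?case
    by (simp add: algebra_simps)
qed simp

lemma dalpha_fp_m_bound:
  "\<exists>C. \<forall>x1 x2 x3. x1 \<noteq> 0 \<and> (x1 * x2, x3) \<noteq> (0, 0) \<longrightarrow>
     \<bar>dalpha a1 a2 a3 fp_m (x1, x2, x3)\<bar>
       \<le> C * \<bar>x1\<bar> powr (- real a1 + real a2) * sqrt ((\<bar>x1\<bar> * x2)\<^sup>2 + x3\<^sup>2) powr (- real a2 - real a3)"
proof -
  obtain L where L: "list_all (has_bidegree (int a2 - int a1) (- int a3 - int a2)) L"
    and expansion: "\<forall>x\<in>fp_domain. dalpha a1 a2 a3 fp_m x = fp_sum L x"
    using has_fp_expansion_dalpha unfolding has_fp_expansion_def by blast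
  have exponents: "real_of_int (int a2 - int a1) = - real a1 + real a2"
    "real_of_int (- int a3 - int a2) = - real a2 - real a3"
    by simp_all
  have "\<forall>x1 x2 x3. x1 \<noteq> 0 \<and> (x1 * x2, x3) \<noteq> (0, 0) \<longrightarrow>
     \<bar>dalpha a1 a2 a3 fp_m (x1, x2, x3)\<bar>
       \<le> (\<Sum>\<tau>\<leftarrow>L. \<bar>fst \<tau>\<bar>) * \<bar>x1\<bar> powr (- real a1 + real a2)
         * sqrt ((\<bar>x1\<bar> * x2)\<^sup>2 + x3\<^sup>2) powr (- real a2 - real a3)"
  proof (intro allI impI)
    fix x1 x2 x3 :: real
    assume "x1 \<noteq> 0 \<and> (x1 * x2, x3) \<noteq> (0, 0)"
    then have x: "(x1, x2, x3) \<in> fp_domain"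
      by auto
    show "\<bar>dalpha a1 a2 a3 fp_m (x1, x2, x3)\<bar>
       \<le> (\<Sum>\<tau>\<leftarrow>L. \<bar>fst \<tau>\<bar>) * \<bar>x1\<bar> powr (- real a1 + real a2)
         * sqrt ((\<bar>x1\<bar> * x2)\<^sup>2 + x3\<^sup>2) powr (- real a2 - real a3)"
      using abs_fp_sum_le[OF x L, unfolded exponents] expansion[rule_format, OF x] by simp
  qed
  then show ?thesis
    by blast
qed

lemma not_AE_bounded_if_unbounded_on_open:
  fixes f :: "'a::euclidean_space \<Rightarrow> real"
  assumes U: "open U" "continuous_on U f" and unbounded: "\<And>C. \<exists>x\<in>U. C < \<bar>f x\<bar>"
  shows "\<not> (\<exists>C. AE x in lborel. \<bar>f x\<bar> \<le> C)"
proof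
  assume "\<exists>C. AE x in lborel. \<bar>f x\<bar> \<le> C"
  then obtain C where bound: "AE x in lborel. \<bar>f x\<bar> \<le> C"
    by blast
  let ?V = "U \<inter> (\<lambda>x. \<bar>f x\<bar>) -` {C<..}"
  have "open ?V"
    using U by (intro continuous_open_preimage continuous_intros) auto
  moreover have "?V \<noteq> {}"
    using unbounded[of C] by auto
  moreover obtain N where "N \<in> null_sets lborel" "?V \<subseteq> N"
    using bound by (force simp: eventually_ae_filter)
  then have "negligible ?V"
    by (metis negligible_iff_null_sets negligible_subset null_sets_completionI)
  ultimately show False
    using open_not_negligible by blast
qed

lemma unbounded_if_abs_eq_divide:
  fixes f :: "'a \<Rightarrow> real"
  assumes "a > 0" and ray: "\<And>t. t > 0 \<Longrightarrow> \<gamma> t \<in> U \<and> \<bar>f (\<gamma> t)\<bar> = a / t"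
  shows "\<exists>x\<in>U. C < \<bar>f x\<bar>"
proof -
  define t where "t = a / (\<bar>C\<bar> + 1)"
  have "t > 0"
    using \<open>a > 0\<close> by (simp add: t_def add_pos_nonneg)
  moreover have "a / t = \<bar>C\<bar> + 1"
    using \<open>a > 0\<close> by (simp add: t_def)
  ultimately show ?thesis
    using ray[of t] by (intro bexI[of _ "\<gamma> t"]) auto
qed

lemma continuous_on_fp_sum: "continuous_on fp_domain (fp_sum L)"
proof (induction L)
  case (Cons \<tau> L)
  obtain c i j k p where \<tau>: "\<tau> = (c, i, j, k, p)"
    by (cases \<tau>) auto
  let ?sqrt = "\<lambda>x. sqrt ((fst x)\<^sup>2 * (fst (snd x))\<^sup>2 + (snd (snd x))\<^sup>2)"
  have "\<forall>x\<in>fp_domain. ?sqrt x \<noteq> 0"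
  proof
    fix x :: "real \<times> real \<times> real"
    assume "x \<in> fp_domain"
    then have "(fst x, fst (snd x), snd (snd x)) \<in> fp_domain"
      by simp
    from fp_domain_radicand_pos[OF this] show "?sqrt x \<noteq> 0"
      by simp
  qed
  then have "continuous_on fp_domain
      (\<lambda>x. c * fst x ^ i * fst (snd x) ^ j * snd (snd x) ^ k * inverse (?sqrt x) ^ p)"
    by (intro continuous_intros)
  moreover have "fp_term \<tau> = (\<lambda>x. c * fst x ^ i * fst (snd x) ^ j * snd (snd x) ^ k * inverse (?sqrt x) ^ p)"
    by (auto simp: \<tau>)
  ultimately show ?case
    using Cons.IH by (simp add: continuous_on_add)
qed simp

lemma first_pd_fp_m:
  assumes "x \<in> fp_domain"
  shows "pd 1 fp_m x = fp_sum [(-1, 1, 2, 1, 3)] x"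
    and "pd 2 fp_m x = fp_sum [(-1, 2, 1, 1, 3)] x"
    and "pd 3 fp_m x = fp_sum [(1, 0, 0, 0, 1), (-1, 0, 0, 2, 3)] x"
proof -
  have "\<forall>x\<in>fp_domain. fp_m x = fp_sum [(1, 0, 0, 1, 1)] x"
    by (simp add: fp_m_eq_fp_term)
  from pd_fp_sum[OF this assms] show "pd 1 fp_m x = fp_sum [(-1, 1, 2, 1, 3)] x"
    and "pd 2 fp_m x = fp_sum [(-1, 2, 1, 1, 3)] x"
    and "pd 3 fp_m x = fp_sum [(1, 0, 0, 0, 1), (-1, 0, 0, 2, 3)] x"
    by (simp_all del: fp_term.simps add: numeral_eq_Suc)
qed

(* Along these rays (x1 x2, x3) is (3t, 4t) or (t, 0), so the square root is 5t or t. *)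
lemma first_pd_fp_m_on_rays:
  assumes "t > 0"
  shows "\<bar>pd 1 fp_m (t, 3, 4 * t)\<bar> = 36 / 125 / t"
    and "\<bar>pd 2 fp_m (3, t, 4 * t)\<bar> = 36 / 125 / t"
    and "\<bar>pd 3 fp_m (1, t, 0)\<bar> = 1 / t"
proof -
  have dom: "(t, 3, 4 * t) \<in> fp_domain" "(3, t, 4 * t) \<in> fp_domain" "(1, t, 0) \<in> fp_domain"
    using assms by auto
  have sqrt_eq: "sqrt (t\<^sup>2 * 25) = 5 * t"
    using assms by (intro real_sqrt_unique) (auto simp: power2_eq_square)
  show "\<bar>pd 1 fp_m (t, 3, 4 * t)\<bar> = 36 / 125 / t"
    using assms unfolding first_pd_fp_m(1)[OF dom(1)] by (simp add: sqrt_eq field_simps power3_eq_cube)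
  show "\<bar>pd 2 fp_m (3, t, 4 * t)\<bar> = 36 / 125 / t"
    using assms unfolding first_pd_fp_m(2)[OF dom(2)] by (simp add: sqrt_eq field_simps power3_eq_cube)
  show "\<bar>pd 3 fp_m (1, t, 0)\<bar> = 1 / t"
    using assms unfolding first_pd_fp_m(3)[OF dom(3)] by (simp add: sqrt_eq field_simps power3_eq_cube)
qed

lemma first_pd_fp_m_not_AE_bounded:
  assumes "i \<in> {1, 2, 3}"
  shows "\<not> (\<exists>C. AE \<xi> in lborel. \<bar>pd i fp_m \<xi>\<bar> \<le> C)"
proof (rule not_AE_bounded_if_unbounded_on_open[OF open_fp_domain])
  have "continuous_on fp_domain (pd 1 fp_m)"
    by (rule continuous_on_eq[OF continuous_on_fp_sum first_pd_fp_m(1)[symmetric]])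
  moreover have "continuous_on fp_domain (pd 2 fp_m)"
    by (rule continuous_on_eq[OF continuous_on_fp_sum first_pd_fp_m(2)[symmetric]])
  moreover have "continuous_on fp_domain (pd 3 fp_m)"
    by (rule continuous_on_eq[OF continuous_on_fp_sum first_pd_fp_m(3)[symmetric]])
  ultimately show "continuous_on fp_domain (pd i fp_m)"
    using assms by auto
  fix C
  have "\<exists>x\<in>fp_domain. C < \<bar>pd 1 fp_m x\<bar>"
    using first_pd_fp_m_on_rays(1) by (intro unbounded_if_abs_eq_divide[of "36 / 125" "\<lambda>t. (t, 3, 4 * t)"]) auto
  moreover have "\<exists>x\<in>fp_domain. C < \<bar>pd 2 fp_m x\<bar>"
    using first_pd_fp_m_on_rays(2) by (intro unbounded_if_abs_eq_divide[of "36 / 125" "\<lambda>t. (3, t, 4 * t)"]) auto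
  moreover have "\<exists>x\<in>fp_domain. C < \<bar>pd 3 fp_m x\<bar>"
    using first_pd_fp_m_on_rays(3) by (intro unbounded_if_abs_eq_divide[of 1 "\<lambda>t. (1, t, 0)"]) auto
  ultimately show "\<exists>x\<in>fp_domain. C < \<bar>pd i fp_m x\<bar>"
    using assms by auto
qed

theorem mainTheorem8:
  shows "(\<forall>a1 a2 a3 :: nat. \<exists>C :: real. \<forall>x1 x2 x3 :: real.
            x1 \<noteq> 0 \<and> (x1 * x2, x3) \<noteq> (0, 0) \<longrightarrow>
            \<bar>dalpha a1 a2 a3 fp_m (x1, x2, x3)\<bar>
              \<le> C * \<bar>x1\<bar> powr (- real a1 + real a2)
                  * sqrt ((\<bar>x1\<bar> * x2)\<^sup>2 + x3\<^sup>2) powr (- real a2 - real a3))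
       \<and> (\<forall>i \<in> {1, 2, 3 :: nat}. \<not> (\<exists>C :: real. AE \<xi> in lborel. \<bar>pd i fp_m \<xi>\<bar> \<le> C))"
  using dalpha_fp_m_bound first_pd_fp_m_not_AE_bounded by blast

end
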